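(* Let $\Omega$ be a measurable space with reference measure $\mathrm{d}\mathbf{y}$, let $q$ be a probability density on $\Omega$, and let $f_{\bm{\theta}}:\Omega\to\mathbb{R}$, $\bm{\theta}\in\Theta$, satisfy $|f_{\bm{\theta}}(\mathbf{y})-\log q(\mathbf{y})|\le C$ for all $\mathbf{y}\in\Omega$ and all $\bm{\theta}\in\Theta$. Fix data $\mathbf{y}_1,\ldots,\mathbf{y}_n\in\Omega$, an integer $m\ge1$ and reference points $\bm{r}_1,\ldots,\bm{r}_m\in\Omega$, and define $$\mathcal{M}(\bm{\theta},\nu)=\sum_{i=1}^n\{f_{\bm{\theta}}(\mathbf{y}_i)+\nu\}-n\int_\Omega\exp\{f_{\bm{\theta}}(\mathbf{y})+\nu\}\,\mathrm{d}\mathbf{y},$$ $$\mathcal{R}^m(\bm{\theta},\nu)=\sum_{i=1}^n\log\left[\frac{n\exp\{f_{\bm{\theta}}(\mathbf{y}_i)+\nu\}}{n\exp\{f_{\bm{\theta}}(\mathbf{y}_i)+\nu\}+mq(\mathbf{y}_i)}\right]+\sum_{j=1}^m\log\left[\frac{mq(\bm{r}_j)}{n\exp\{f_{\bm{\theta}}(\bm{r}_j)+\nu\}+mq(\bm{r}_j)}\right].$$ Then there exists a bounded interval $I\subset\mathbb{R}$ such that, for every $\bm{\theta}\in\Theta$, the maximum of both functions $\nu\mapsto\mathcal{M}(\bm{\theta},\nu)$ and $\nu\mapsto\mathcal{R}^m(\bm{\theta},\nu)$ is attained in $I$. *)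

theory Defs
  imports "HOL-Analysis.Analysis"
begin

definition Mobj :: "'a measure \<Rightarrow> ('a \<Rightarrow> real) \<Rightarrow> nat \<Rightarrow> (nat \<Rightarrow> 'a) \<Rightarrow> real \<Rightarrow> real" where
  "Mobj Mu g n y \<nu> =
     (\<Sum>i = 1..n. g (y i) + \<nu>) - real n * (\<integral>x. exp (g x + \<nu>) \<partial>Mu)"

definition Robj :: "('a \<Rightarrow> real) \<Rightarrow> ('a \<Rightarrow> real) \<Rightarrow> nat \<Rightarrow> (nat \<Rightarrow> 'a) \<Rightarrow> nat \<Rightarrow> (nat \<Rightarrow> 'a) \<Rightarrow> real \<Rightarrow> real" where
  "Robj q g n y m r \<nu> =
     (\<Sum>i = 1..n. ln (real n * exp (g (y i) + \<nu>) /
                     (real n * exp (g (y i) + \<nu>) + real m * q (y i))))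
   + (\<Sum>j = 1..m. ln (real m * q (r j) /
                     (real n * exp (g (r j) + \<nu>) + real m * q (r j))))"

end

theory Submission
  imports Defs
begin

text \<open>
  In \<open>\<nu>\<close> the objective \<open>\<M>\<close> is \<open>const + n(\<nu> - e\<^sup>\<nu> I)\<close> with \<open>I = \<integral> exp f\<^sub>\<theta>\<close>, so it is maximal
  at \<open>\<nu> = -ln I\<close>; the bound on \<open>f\<^sub>\<theta> - log q\<close> puts \<open>I\<close> between \<open>e\<^sup>-\<^sup>C\<close> and \<open>e\<^sup>C\<close>, hence
  \<open>\<nu> \<in> [-C, C]\<close>.
  Each summand of \<open>\<R>\<^sup>m\<close> is minus a softplus \<open>ln (1 + e\<^sup>t)\<close>, evaluated at \<open>s(y\<^sub>i) - \<nu>\<close> for the data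
  and at \<open>\<nu> - s(r\<^sub>j)\<close> for the reference points, where all offsets \<open>s\<close> lie within \<open>C\<close> of
  \<open>c = ln (m/n)\<close>. Since softplus is nonnegative and dominates the identity, a single data
  term forces \<open>\<R>\<^sup>m(\<nu>) \<le> \<nu> - c + C\<close> and a single reference term forces \<open>\<R>\<^sup>m(\<nu>) \<le> c + C - \<nu>\<close>,
  while \<open>\<R>\<^sup>m(c)\<close> is bounded below independently of \<open>\<theta>\<close>. So outside a fixed interval \<open>\<R>\<^sup>m\<close> is
  below its value at \<open>c\<close>, and continuity gives a maximiser inside it.
\<close>

lemma continuous_attains_max_if_dominated_outside:
  fixes F :: "real \<Rightarrow> real"
  assumes "continuous_on {a..b} F" and "c \<in> {a..b}"
    and "\<And>\<nu>. \<nu> \<notin> {a..b} \<Longrightarrow> F \<nu> \<le> F c"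
  shows "\<exists>\<nu>\<in>{a..b}. \<forall>\<nu>'. F \<nu>' \<le> F \<nu>"
proof -
  obtain \<nu> where "\<nu> \<in> {a..b}" and max_in: "\<And>\<nu>'. \<nu>' \<in> {a..b} \<Longrightarrow> F \<nu>' \<le> F \<nu>"
    using continuous_attains_sup[OF compact_Icc _ assms(1)] assms(2) by auto
  moreover have "F \<nu>' \<le> F \<nu>" for \<nu>'
    using max_in[of \<nu>'] max_in[OF assms(2)] assms(3)[of \<nu>'] by (cases "\<nu>' \<in> {a..b}") auto
  ultimately show ?thesis by blast
qed

lemma diff_exp_mult_le:
  fixes I \<nu> :: real
  assumes "I > 0"
  shows "\<nu> - exp \<nu> * I \<le> - ln I - exp (- ln I) * I"
proof -
  have "1 + (\<nu> + ln I) \<le> exp (\<nu> + ln I)" by (rule exp_ge_add_one_self)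
  also have "\<dots> = exp \<nu> * I" using assms by (simp add: exp_add)
  finally show ?thesis using assms by (simp add: exp_minus)
qed

lemma integral_density_eq_1:
  fixes q :: "'a \<Rightarrow> real"
  assumes "q \<in> borel_measurable Mu" and "\<And>x. x \<in> space Mu \<Longrightarrow> q x \<ge> 0"
    and "(\<integral>\<^sup>+ x. ennreal (q x) \<partial>Mu) = 1"
  shows "integrable Mu q" and "integral\<^sup>L Mu q = 1"
proof -
  show q_int: "integrable Mu q"
    using assms by (intro integrableI_nn_integral_finite[where x = 1]) (auto intro: AE_I2)
  have "ennreal (integral\<^sup>L Mu q) = 1"
    using nn_integral_eq_integral[OF q_int] assms by (auto intro: AE_I2)
  moreover have "integral\<^sup>L Mu q \<ge> 0" using assms by (intro integral_nonneg_AE) (auto intro: AE_I2)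
  ultimately show "integral\<^sup>L Mu q = 1" by (metis ennreal_1 ennreal_inj zero_le_one)
qed

lemma exp_bounds_if_abs_diff_ln_le:
  fixes x g C :: real
  assumes "x > 0" and "\<bar>g - ln x\<bar> \<le> C"
  shows "exp (- C) * x \<le> exp g" and "exp g \<le> exp C * x"
proof -
  have exp_g: "exp g = exp (g - ln x) * x" using assms(1) by (simp add: exp_diff)
  have "exp (- C) \<le> exp (g - ln x)" "exp (g - ln x) \<le> exp C" using assms(2) by auto
  then show "exp (- C) * x \<le> exp g" "exp g \<le> exp C * x"
    unfolding exp_g using assms(1) by (auto intro: mult_right_mono)
qed

lemma integral_exp_bounds:
  fixes q g :: "'a \<Rightarrow> real"
  assumes q_meas: "q \<in> borel_measurable Mu" and q_pos: "\<And>x. x \<in> space Mu \<Longrightarrow> q x > 0"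
    and q_prob: "(\<integral>\<^sup>+ x. ennreal (q x) \<partial>Mu) = 1"
    and g_meas: "g \<in> borel_measurable Mu"
    and g_bound: "\<And>x. x \<in> space Mu \<Longrightarrow> \<bar>g x - ln (q x)\<bar> \<le> C"
  shows "exp (- C) \<le> (\<integral>x. exp (g x) \<partial>Mu)" and "(\<integral>x. exp (g x) \<partial>Mu) \<le> exp C"
proof -
  have q_int: "integrable Mu q" and q_1: "integral\<^sup>L Mu q = 1"
    using integral_density_eq_1[OF q_meas _ q_prob] q_pos by (auto simp: less_imp_le)
  note exp_bounds = exp_bounds_if_abs_diff_ln_le[OF q_pos g_bound]
  have exp_g_int: "integrable Mu (\<lambda>x. exp (g x))"
  proof (rule Bochner_Integration.integrable_bound[OF integrable_mult_right[OF q_int]])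
    show "(\<lambda>x. exp (g x)) \<in> borel_measurable Mu" using g_meas by measurable
    show "AE x in Mu. norm (exp (g x)) \<le> norm (exp C * q x)"
      using exp_bounds q_pos by (auto intro!: AE_I2 simp: abs_of_pos)
  qed
  show "exp (- C) \<le> (\<integral>x. exp (g x) \<partial>Mu)" "(\<integral>x. exp (g x) \<partial>Mu) \<le> exp C"
    using integral_mono[OF integrable_mult_right[OF q_int] exp_g_int, of "exp (- C)"]
      integral_mono[OF exp_g_int integrable_mult_right[OF q_int], of "exp C"] exp_bounds
    by (auto simp: q_1)
qed

lemma Mobj_attains_max:
  fixes q g :: "'a \<Rightarrow> real"
  assumes "q \<in> borel_measurable Mu" and "\<And>x. x \<in> space Mu \<Longrightarrow> q x > 0"
    and "(\<integral>\<^sup>+ x. ennreal (q x) \<partial>Mu) = 1"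
    and "g \<in> borel_measurable Mu"
    and "\<And>x. x \<in> space Mu \<Longrightarrow> \<bar>g x - ln (q x)\<bar> \<le> C"
  shows "\<exists>\<nu>\<in>{-C..C}. \<forall>\<nu>'. Mobj Mu g n y \<nu>' \<le> Mobj Mu g n y \<nu>"
proof -
  define I where "I = (\<integral>x. exp (g x) \<partial>Mu)"
  have I_bounds: "exp (- C) \<le> I" "I \<le> exp C"
    unfolding I_def using integral_exp_bounds[OF assms] by auto
  then have I_pos: "I > 0" using exp_gt_zero[of "- C"] by linarith
  have Mobj_eq: "Mobj Mu g n y \<nu> = (\<Sum>i = 1..n. g (y i)) + real n * (\<nu> - exp \<nu> * I)" for \<nu>
    unfolding Mobj_def I_def
    by (simp add: exp_add sum.distrib algebra_simps flip: integral_mult_right_zero)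
  show ?thesis
  proof (intro bexI allI)
    show "Mobj Mu g n y \<nu> \<le> Mobj Mu g n y (- ln I)" for \<nu>
      unfolding Mobj_eq using diff_exp_mult_le[OF I_pos] by (simp add: mult_left_mono)
    have "ln I \<le> C" using ln_le_cancel_iff[of I "exp C"] I_bounds I_pos by simp
    moreover have "- C \<le> ln I" using ln_ge_iff[OF I_pos] I_bounds by simp
    ultimately show "- ln I \<in> {-C..C}" by simp
  qed
qed

definition softplus :: "real \<Rightarrow> real" where
  "softplus t = ln (1 + exp t)"

lemma softplus_nonneg: "0 \<le> softplus t"
  unfolding softplus_def by (simp add: add_pos_nonneg)

lemma le_softplus: "t \<le> softplus t"
  unfolding softplus_def by (simp add: ln_ge_iff add_pos_nonneg)

lemma softplus_mono: "s \<le> t \<Longrightarrow> softplus s \<le> softplus t"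
  unfolding softplus_def by (simp add: add_pos_nonneg)

lemma continuous_on_softplus [continuous_intros]:
  assumes "continuous_on S f"
  shows "continuous_on S (\<lambda>x. softplus (f x))"
proof -
  have "1 + exp t \<noteq> 0" for t :: real using exp_gt_zero[of t] by linarith
  then show ?thesis unfolding softplus_def using assms by (intro continuous_intros) auto
qed

lemma ln_div_add_eq_neg_softplus:
  fixes a b :: real
  assumes "a > 0" and "b > 0"
  shows "ln (a / (a + b)) = - softplus (ln b - ln a)"
proof -
  have "a / (a + b) = inverse (1 + exp (ln b - ln a))"
    using assms by (simp add: exp_diff field_simps)
  then show ?thesis unfolding softplus_def by (simp add: ln_inverse add_pos_nonneg)
qed

lemma neg_softplus_sum_attains_max:
  fixes u :: "'i \<Rightarrow> real" and w :: "'j \<Rightarrow> real"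
  assumes "finite I" and "finite J" and "i\<^sub>0 \<in> I" and "j\<^sub>0 \<in> J"
    and u_near: "\<And>i. i \<in> I \<Longrightarrow> \<bar>u i - c\<bar> \<le> D"
    and w_near: "\<And>j. j \<in> J \<Longrightarrow> \<bar>w j - c\<bar> \<le> D"
  shows "\<exists>\<nu>\<in>{c - D - real (card I + card J) * softplus D ..
               c + D + real (card I + card J) * softplus D}.
           \<forall>\<nu>'. - (\<Sum>i\<in>I. softplus (u i - \<nu>')) - (\<Sum>j\<in>J. softplus (\<nu>' - w j))
                \<le> - (\<Sum>i\<in>I. softplus (u i - \<nu>)) - (\<Sum>j\<in>J. softplus (\<nu> - w j))"
proof -
  define K where "K = real (card I + card J) * softplus D"
  define F where "F = (\<lambda>\<nu>. - (\<Sum>i\<in>I. softplus (u i - \<nu>)) - (\<Sum>j\<in>J. softplus (\<nu> - w j)))"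
  have sums_ge: "softplus (u i\<^sub>0 - \<nu>) \<le> (\<Sum>i\<in>I. softplus (u i - \<nu>))"
    "softplus (\<nu> - w j\<^sub>0) \<le> (\<Sum>j\<in>J. softplus (\<nu> - w j))" for \<nu>
    using assms(1-4) by (auto intro: member_le_sum softplus_nonneg)
  have "(\<Sum>i\<in>I. softplus (u i - c)) \<le> real (card I) * softplus D"
    "(\<Sum>j\<in>J. softplus (c - w j)) \<le> real (card J) * softplus D"
    using u_near w_near by (auto intro!: sum_bounded_above softplus_mono simp: abs_le_iff)
  then have F_c: "- K \<le> F c" unfolding F_def K_def by (simp add: algebra_simps)
  have F_left: "F \<nu> \<le> \<nu> - c + D" for \<nu>
    using sums_ge[of \<nu>] le_softplus[of "u i\<^sub>0 - \<nu>"] softplus_nonneg u_near[OF assms(3)]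
      sum_nonneg[of J "\<lambda>j. softplus (\<nu> - w j)"] unfolding F_def by force
  have F_right: "F \<nu> \<le> c + D - \<nu>" for \<nu>
    using sums_ge[of \<nu>] le_softplus[of "\<nu> - w j\<^sub>0"] softplus_nonneg w_near[OF assms(4)]
      sum_nonneg[of I "\<lambda>i. softplus (u i - \<nu>)"] unfolding F_def by force
  have "K \<ge> 0" "D \<ge> 0" using softplus_nonneg u_near[OF assms(3)] unfolding K_def by auto
  have "\<exists>\<nu>\<in>{c - D - K .. c + D + K}. \<forall>\<nu>'. F \<nu>' \<le> F \<nu>"
  proof (rule continuous_attains_max_if_dominated_outside)
    show "continuous_on {c - D - K .. c + D + K} F"
      unfolding F_def by (intro continuous_intros)
    show "c \<in> {c - D - K .. c + D + K}" using \<open>K \<ge> 0\<close> \<open>D \<ge> 0\<close> by simp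
    show "F \<nu> \<le> F c" if "\<nu> \<notin> {c - D - K .. c + D + K}" for \<nu>
      using that F_left[of \<nu>] F_right[of \<nu>] F_c by auto
  qed
  then show ?thesis unfolding F_def K_def .
qed

lemma Robj_eq_neg_softplus_sum:
  fixes q g :: "'a \<Rightarrow> real"
  assumes "n \<ge> 1" and "m \<ge> 1"
    and "\<And>i. i \<in> {1..n} \<Longrightarrow> q (y i) > 0" and "\<And>j. j \<in> {1..m} \<Longrightarrow> q (r j) > 0"
  shows "Robj q g n y m r \<nu> =
           - (\<Sum>i = 1..n. softplus (ln (real m / real n) + ln (q (y i)) - g (y i) - \<nu>))
           - (\<Sum>j = 1..m. softplus (\<nu> - (ln (real m / real n) + ln (q (r j)) - g (r j))))"
proof -
  have ln_ratio: "ln (real m * q x) - ln (real n * exp (g x + \<nu>))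
      = ln (real m / real n) + ln (q x) - g x - \<nu>" if "q x > 0" for x
    using that assms(1,2) by (simp add: ln_mult ln_div)
  have data_term: "ln (real n * exp (g x + \<nu>) / (real n * exp (g x + \<nu>) + real m * q x))
      = - softplus (ln (real m / real n) + ln (q x) - g x - \<nu>)" if "q x > 0" for x
    using ln_div_add_eq_neg_softplus[of "real n * exp (g x + \<nu>)" "real m * q x"] ln_ratio[OF that]
      that assms(1,2) by simp
  have reference_term: "ln (real m * q x / (real n * exp (g x + \<nu>) + real m * q x))
      = - softplus (\<nu> - (ln (real m / real n) + ln (q x) - g x))" if "q x > 0" for x
  proof -
    have "ln (real n * exp (g x + \<nu>)) - ln (real m * q x)
        = \<nu> - (ln (real m / real n) + ln (q x) - g x)"
      using ln_ratio[OF that] by linarith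
    then show ?thesis
      using ln_div_add_eq_neg_softplus[of "real m * q x" "real n * exp (g x + \<nu>)"] that assms(1,2)
      by (simp add: add.commute[of "real n * exp (g x + \<nu>)"])
  qed
  have "(\<Sum>i = 1..n. ln (real n * exp (g (y i) + \<nu>) / (real n * exp (g (y i) + \<nu>) + real m * q (y i))))
      = (\<Sum>i = 1..n. - softplus (ln (real m / real n) + ln (q (y i)) - g (y i) - \<nu>))"
    using assms(3) by (intro sum.cong refl data_term) auto
  moreover have "(\<Sum>j = 1..m. ln (real m * q (r j) / (real n * exp (g (r j) + \<nu>) + real m * q (r j))))
      = (\<Sum>j = 1..m. - softplus (\<nu> - (ln (real m / real n) + ln (q (r j)) - g (r j))))"
    using assms(4) by (intro sum.cong refl reference_term) auto
  ultimately show ?thesis unfolding Robj_def by (simp add: sum_negf)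
qed

lemma Robj_attains_max:
  fixes q g :: "'a \<Rightarrow> real"
  assumes "n \<ge> 1" and "m \<ge> 1"
    and q_pos_y: "\<And>i. i \<in> {1..n} \<Longrightarrow> q (y i) > 0"
    and q_pos_r: "\<And>j. j \<in> {1..m} \<Longrightarrow> q (r j) > 0"
    and g_near_y: "\<And>i. i \<in> {1..n} \<Longrightarrow> \<bar>g (y i) - ln (q (y i))\<bar> \<le> C"
    and g_near_r: "\<And>j. j \<in> {1..m} \<Longrightarrow> \<bar>g (r j) - ln (q (r j))\<bar> \<le> C"
  shows "\<exists>\<nu>\<in>{ln (real m / real n) - C - real (n + m) * softplus C ..
               ln (real m / real n) + C + real (n + m) * softplus C}.
           \<forall>\<nu>'. Robj q g n y m r \<nu>' \<le> Robj q g n y m r \<nu>"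
proof -
  define s where "s x = ln (real m / real n) + ln (q x) - g x" for x
  have "\<bar>s x - ln (real m / real n)\<bar> \<le> C" if "\<bar>g x - ln (q x)\<bar> \<le> C" for x
    using that unfolding s_def by linarith
  then have "\<exists>\<nu>\<in>{ln (real m / real n) - C - real (card {1..n} + card {1..m}) * softplus C ..
                   ln (real m / real n) + C + real (card {1..n} + card {1..m}) * softplus C}.
      \<forall>\<nu>'. - (\<Sum>i = 1..n. softplus (s (y i) - \<nu>')) - (\<Sum>j = 1..m. softplus (\<nu>' - s (r j)))
         \<le> - (\<Sum>i = 1..n. softplus (s (y i) - \<nu>)) - (\<Sum>j = 1..m. softplus (\<nu> - s (r j)))"
    using assms(1,2) g_near_y g_near_r
    by (intro neg_softplus_sum_attains_max[where i\<^sub>0 = 1 and j\<^sub>0 = 1]) auto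
  moreover have "Robj q g n y m r \<nu> =
      - (\<Sum>i = 1..n. softplus (s (y i) - \<nu>)) - (\<Sum>j = 1..m. softplus (\<nu> - s (r j)))" for \<nu>
    unfolding s_def by (rule Robj_eq_neg_softplus_sum) (use assms in auto)
  ultimately show ?thesis by simp
qed

theorem lemma1:
  fixes Mu :: "'a measure" and q :: "'a \<Rightarrow> real"
    and f :: "'b \<Rightarrow> 'a \<Rightarrow> real" and \<Theta> :: "'b set" and C :: real
    and n m :: nat and y r :: "nat \<Rightarrow> 'a"
  assumes q_meas: "q \<in> borel_measurable Mu"
    and q_pos: "\<And>x. x \<in> space Mu \<Longrightarrow> q x > 0"
    and q_prob: "(\<integral>\<^sup>+ x. ennreal (q x) \<partial>Mu) = 1"
    and f_meas: "\<And>\<theta>. \<theta> \<in> \<Theta> \<Longrightarrow> f \<theta> \<in> borel_measurable Mu"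
    and f_bound: "\<And>\<theta> x. \<theta> \<in> \<Theta> \<Longrightarrow> x \<in> space Mu \<Longrightarrow> \<bar>f \<theta> x - ln (q x)\<bar> \<le> C"
    and y_in: "\<And>i. i \<in> {1..n} \<Longrightarrow> y i \<in> space Mu"
    and m_pos: "m \<ge> 1"
    and r_in: "\<And>j. j \<in> {1..m} \<Longrightarrow> r j \<in> space Mu"
  shows "\<exists>a b::real. \<forall>\<theta>\<in>\<Theta>.
           (\<exists>\<nu>\<in>{a..b}. \<forall>\<nu>'. Mobj Mu (f \<theta>) n y \<nu>' \<le> Mobj Mu (f \<theta>) n y \<nu>) \<and>
           (\<exists>\<nu>\<in>{a..b}. \<forall>\<nu>'. Robj q (f \<theta>) n y m r \<nu>' \<le> Robj q (f \<theta>) n y m r \<nu>)"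
proof (cases "n = 0")
  case True
  then have "Mobj Mu (f \<theta>) n y \<nu> = 0" "Robj q (f \<theta>) n y m r \<nu> = 0" for \<theta> \<nu>
    unfolding Mobj_def Robj_def using q_pos r_in by (auto intro!: sum.neutral)
  then show ?thesis by auto
next
  case False
  define c where "c = ln (real m / real n)"
  define K where "K = real (n + m) * softplus C"
  define a b where "a = min (- C) (c - C - K)" and "b = max C (c + C + K)"
  have "(\<exists>\<nu>\<in>{a..b}. \<forall>\<nu>'. Mobj Mu (f \<theta>) n y \<nu>' \<le> Mobj Mu (f \<theta>) n y \<nu>) \<and>
        (\<exists>\<nu>\<in>{a..b}. \<forall>\<nu>'. Robj q (f \<theta>) n y m r \<nu>' \<le> Robj q (f \<theta>) n y m r \<nu>)"
    if \<theta>: "\<theta> \<in> \<Theta>" for \<theta>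
  proof -
    have "\<exists>\<nu>\<in>{-C..C}. \<forall>\<nu>'. Mobj Mu (f \<theta>) n y \<nu>' \<le> Mobj Mu (f \<theta>) n y \<nu>"
      using Mobj_attains_max[OF q_meas q_pos q_prob f_meas[OF \<theta>] f_bound[OF \<theta>]] .
    moreover have "\<exists>\<nu>\<in>{c - C - K .. c + C + K}.
        \<forall>\<nu>'. Robj q (f \<theta>) n y m r \<nu>' \<le> Robj q (f \<theta>) n y m r \<nu>"
      unfolding c_def K_def using False m_pos
      by (intro Robj_attains_max q_pos y_in r_in f_bound[OF \<theta>]) auto
    ultimately show ?thesis unfolding a_def b_def
      by (meson atLeastAtMost_iff max.coboundedI1 max.coboundedI2
          min.coboundedI1 min.coboundedI2 order_trans)
  qed
  then show ?thesis by blast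
qed

end
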